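(* Let $f,g\in\mathbb{C}[X]$ with $\deg f=n\ge 1$ and $g\mid f$, $g\neq 0$. Then $\Phi(g):=f g'/g=\sum_{i=0}^{n-1}a_iX^i\in\mathbb{C}[X]$ and for every $0\le i\le n-1$, $$|a_i|\le B_i:=\binom{n-1}{i}\,n\,M(f).$$
   Context: For $h\in\mathbb{C}[X]$ with leading coefficient $\ell_h$, the Mahler measure is $M(h)=|\ell_h|\prod_{|\alpha|>1}|\alpha|^{m_\alpha}$, the product over the complex roots $\alpha$ of $h$ with $|\alpha|>1$, $m_\alpha$ the multiplicity of $\alpha$. *)

theory Defs
  imports "Berlekamp_Zassenhaus.Mahler_Measure"
begin

end

theory Submission
  imports Defs "Berlekamp_Zassenhaus.Factor_Bound"
begin

text \<open>Write \<open>g = c \<Prod>\<^sub>j (X - \<alpha>\<^sub>j)\<close> and \<open>f = g h\<close>. By the product rule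
  \<open>h g' = \<Sum>\<^sub>j f / (X - \<alpha>\<^sub>j)\<close>, a sum of \<open>deg g \<le> n\<close> polynomials. Each summand has degree
  \<open>n - 1\<close> and, having lost only the monic factor \<open>X - \<alpha>\<^sub>j\<close> of \<open>f\<close>, Mahler measure at most
  \<open>M(f)\<close>; Mignotte's bound \<open>|coeff p i| \<le> binom (deg p) i M(p)\<close> then bounds its coefficients
  by \<open>binom (n - 1) i M(f)\<close>.\<close>

lemma mahler_measure_poly_nonneg: "0 \<le> mahler_measure_poly p"
  by (simp add: mahler_measure_poly_via_monic mahler_measure_monic_ge_0)

lemma lead_coeff_le_mahler_measure_poly: "cmod (lead_coeff p) \<le> mahler_measure_poly p"
proof -
  have "cmod (lead_coeff p) * 1 \<le> cmod (lead_coeff p) * mahler_measure_monic p"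
    by (intro mult_left_mono mahler_measure_monic_ge_1) simp
  then show ?thesis
    by (simp add: mahler_measure_poly_via_monic)
qed

lemma mahler_measure_poly_le_mult_monic:
  assumes "monic r"
  shows "mahler_measure_poly q \<le> mahler_measure_poly (q * r)"
proof -
  have "1 \<le> mahler_measure_poly r"
    using assms mahler_measure_monic_ge_1 by (simp add: mahler_measure_poly_via_monic)
  then show ?thesis
    using mult_left_mono[OF _ mahler_measure_poly_nonneg] by (force simp: measure_eq_prod)
qed

lemma coeff_le_mahler_measure_poly:
  "cmod (coeff p i) \<le> real (degree p choose i) * mahler_measure_poly p"
proof (cases "degree p")
  case 0
  then show ?thesis
    using lead_coeff_le_mahler_measure_poly[of p] mahler_measure_poly_nonneg[of p]
    by (cases i) (simp_all add: coeff_eq_0)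
next
  case (Suc d)
  have "cmod (coeff p i) \<le> real (d choose i) * mahler_measure_poly p
      + real (min i 1 * (d choose (i - 1))) * cmod (lead_coeff p)"
    using mignotte_helper_coeff[of p i] Suc by simp
  also have "\<dots> \<le> real (d choose i) * mahler_measure_poly p
      + real (min i 1 * (d choose (i - 1))) * mahler_measure_poly p"
    by (intro add_left_mono mult_left_mono lead_coeff_le_mahler_measure_poly) simp
  also have "\<dots> = real ((d choose i) + min i 1 * (d choose (i - 1))) * mahler_measure_poly p"
    by (simp add: algebra_simps)
  also have "(d choose i) + min i 1 * (d choose (i - 1)) = degree p choose i"
    using Suc by (cases i) simp_all
  finally show ?thesis .
qed

lemma coeff_sum_mset: "coeff (\<Sum>x\<in>#A. p x) i = (\<Sum>x\<in>#A. coeff (p x) i)"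
  by (induction A) simp_all

lemma degree_sum_mset_le:
  assumes "\<And>x. x \<in># A \<Longrightarrow> degree (p x) \<le> d"
  shows "degree (\<Sum>x\<in>#A. p x) \<le> d"
  using assms by (induction A) (auto intro: order.trans[OF degree_add_le])

lemma norm_sum_mset_le_size_mult:
  fixes F :: "'a \<Rightarrow> 'b :: real_normed_vector"
  assumes "\<And>x. x \<in># A \<Longrightarrow> norm (F x) \<le> B"
  shows "norm (\<Sum>x\<in>#A. F x) \<le> real (size A) * B"
  using assms
proof (induction A)
  case (add x A)
  then have "norm (F x + (\<Sum>x\<in>#A. F x)) \<le> B + real (size A) * B"
    by (intro order.trans[OF norm_triangle_ineq] add_mono) auto
  then show ?case
    by (simp add: algebra_simps)
qed simp

text \<open>Carrying an arbitrary cofactor \<open>q\<close> makes the induction go through without ever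
  removing an element from the multiset.\<close>

lemma mult_pderiv_prod_mset_linear:
  fixes q :: "'a :: field poly"
  shows "q * pderiv (\<Prod>b\<in>#A. [:-b, 1:]) = (\<Sum>a\<in>#A. q * (\<Prod>b\<in>#A. [:-b, 1:]) div [:-a, 1:])"
proof (induction A arbitrary: q)
  case empty
  then show ?case by simp
next
  case (add x A)
  let ?P = "\<Prod>b\<in>#A. [:-b, 1:]"
  have "pderiv [:-x, 1:] = 1"
    by (simp add: pderiv_pCons)
  then have "q * pderiv ([:-x, 1:] * ?P) = q * ?P + ([:-x, 1:] * q) * pderiv ?P"
    by (simp only: pderiv_mult) (simp only: distrib_left mult_1_left mult_ac add_ac)
  also have "([:-x, 1:] * q) * pderiv ?P = (\<Sum>a\<in>#A. [:-x, 1:] * q * ?P div [:-a, 1:])"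
    by (rule add.IH)
  also have "q * ?P = q * ([:-x, 1:] * ?P) div [:-x, 1:]"
    by (simp add: mult.left_commute[of q] del: mult_pCons_left)
  finally show ?case
    by (simp add: algebra_simps)
qed

lemma mult_pderiv_div_eq_sum_div_linear:
  fixes f g :: "complex poly"
  assumes "g dvd f" and "g \<noteq> 0"
  shows "f * pderiv g div g = (\<Sum>a\<in>#proots g. f div [:-a, 1:])"
proof -
  obtain h where f: "f = g * h"
    using assms(1) by blast
  let ?P = "\<Prod>b\<in>#proots g. [:-b, 1:]"
  have g: "g = smult (lead_coeff g) ?P"
    by (rule complex_poly_decompose_multiset[symmetric])
  have cofactor: "smult (lead_coeff g) h * ?P = f"
    by (subst f, subst (2) g) (simp add: mult.commute)
  have "f * pderiv g div g = h * pderiv g"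
    using assms(2) by (simp add: f mult.assoc)
  also have "\<dots> = smult (lead_coeff g) h * pderiv ?P"
    by (subst g) (simp add: pderiv_smult)
  also have "\<dots> = (\<Sum>a\<in>#proots g. smult (lead_coeff g) h * ?P div [:-a, 1:])"
    by (rule mult_pderiv_prod_mset_linear)
  finally show ?thesis
    by (simp only: cofactor)
qed

lemma degree_div_linear_root:
  fixes f :: "'a :: field poly"
  assumes "poly f a = 0"
  shows "degree (f div [:-a, 1:]) = degree f - 1"
proof (cases "f = 0")
  case False
  have f: "[:-a, 1:] * (f div [:-a, 1:]) = f"
    using assms by (metis dvd_mult_div_cancel poly_eq_0_iff_dvd)
  with False have "f div [:-a, 1:] \<noteq> 0"
    by auto
  then have "degree ([:-a, 1:] * (f div [:-a, 1:])) = 1 + degree (f div [:-a, 1:])"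
    by (subst degree_mult_eq) simp_all
  then show ?thesis
    by (simp only: f)
qed simp

lemma coeff_div_linear_root_le:
  fixes f :: "complex poly"
  assumes "poly f a = 0"
  shows "cmod (coeff (f div [:-a, 1:]) i) \<le> real ((degree f - 1) choose i) * mahler_measure_poly f"
proof -
  have "mahler_measure_poly (f div [:-a, 1:]) \<le> mahler_measure_poly (f div [:-a, 1:] * [:-a, 1:])"
    by (rule mahler_measure_poly_le_mult_monic) simp
  also have "f div [:-a, 1:] * [:-a, 1:] = f"
    using assms by (metis dvd_div_mult_self poly_eq_0_iff_dvd)
  finally have "real ((degree f - 1) choose i) * mahler_measure_poly (f div [:-a, 1:])
      \<le> real ((degree f - 1) choose i) * mahler_measure_poly f"
    by (rule mult_left_mono) simp
  with coeff_le_mahler_measure_poly[of "f div [:-a, 1:]" i] show ?thesis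
    unfolding degree_div_linear_root[OF assms] by linarith
qed

theorem lemma4p1:
  fixes f g :: "complex poly" and n :: nat
  assumes "degree f = n" and "n \<ge> 1" and "g dvd f" and "g \<noteq> 0"
  shows "g dvd f * pderiv g
    \<and> degree (f * pderiv g div g) \<le> n - 1
    \<and> (\<forall>i \<le> n - 1. cmod (coeff (f * pderiv g div g) i)
          \<le> real ((n - 1) choose i) * real n * mahler_measure_poly f)"
proof -
  have sum: "f * pderiv g div g = (\<Sum>a\<in>#proots g. f div [:-a, 1:])"
    using assms(3,4) by (rule mult_pderiv_div_eq_sum_div_linear)
  have root: "poly f a = 0" if "a \<in># proots g" for a
    using that assms(3,4) by (auto elim!: dvdE)
  have "f \<noteq> 0"
    using assms(1,2) by auto
  then have "size (proots g) \<le> n"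
    using assms(1) dvd_imp_degree_le[OF assms(3)] by (simp add: size_proots_complex)
  then have few_roots: "real (size (proots g)) * B \<le> real n * B" if "0 \<le> B" for B :: real
    using that by (intro mult_right_mono) simp_all
  show ?thesis
  proof (intro conjI allI impI)
    show "g dvd f * pderiv g"
      using assms(3) by simp
    show "degree (f * pderiv g div g) \<le> n - 1"
      unfolding sum using assms(1) degree_div_linear_root[OF root] by (intro degree_sum_mset_le) simp
    fix i
    have "cmod (coeff (f * pderiv g div g) i)
        \<le> real (size (proots g)) * (real ((n - 1) choose i) * mahler_measure_poly f)"
      unfolding sum coeff_sum_mset using assms(1) coeff_div_linear_root_le[OF root] by (intro norm_sum_mset_le_size_mult) simp
    also have "\<dots> \<le> real n * (real ((n - 1) choose i) * mahler_measure_poly f)"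
      by (intro few_roots mult_nonneg_nonneg mahler_measure_poly_nonneg) simp
    finally show "cmod (coeff (f * pderiv g div g) i)
        \<le> real ((n - 1) choose i) * real n * mahler_measure_poly f"
      by (simp add: algebra_simps)
  qed
qed

end
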